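(* For every positive integer $n$, $$LD(P_3\square P_n)\geq\begin{cases} n+1 & \text{if } n\equiv 1 \pmod 3,\\ n & \text{otherwise.}\end{cases}$$
   Context: $P_n$ is the path on $n$ vertices and $\square$ is the Cartesian product of graphs. For a graph $G$, $C\subseteq V(G)$ and $v\in V(G)$ let $I(v)=N[v]\cap C$ ($N[v]$ the closed neighborhood). $C$ is a locating-dominating set if $I(v)\neq\emptyset$ for all $v\in V(G)\setminus C$ and $I(u)\neq I(v)$ for all distinct $u,v\in V(G)\setminus C$. $LD(G)$ is the minimum cardinality of a locating-dominating set of $G$. *)

theory Defs
  imports Main
begin

(* A graph is given by a vertex set V and a symmetric irreflexive adjacency relation E. *)

definition closed_nbhd :: "'a set \<Rightarrow> ('a \<Rightarrow> 'a \<Rightarrow> bool) \<Rightarrow> 'a \<Rightarrow> 'a set" where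
  "closed_nbhd V E v = {u \<in> V. u = v \<or> E v u}"

definition locating_dominating :: "'a set \<Rightarrow> ('a \<Rightarrow> 'a \<Rightarrow> bool) \<Rightarrow> 'a set \<Rightarrow> bool" where
  "locating_dominating V E C \<longleftrightarrow> C \<subseteq> V \<and>
     (\<forall>v \<in> V - C. closed_nbhd V E v \<inter> C \<noteq> {}) \<and>
     (\<forall>u \<in> V - C. \<forall>v \<in> V - C. u \<noteq> v \<longrightarrow> closed_nbhd V E u \<inter> C \<noteq> closed_nbhd V E v \<inter> C)"

(* LD(G): minimum cardinality of a locating-dominating set (for finite V; V itself is one). *)
definition LD :: "'a set \<Rightarrow> ('a \<Rightarrow> 'a \<Rightarrow> bool) \<Rightarrow> nat" where
  "LD V E = (LEAST k. \<exists>C. locating_dominating V E C \<and> card C = k)"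

definition path_vertices :: "nat \<Rightarrow> nat set" where
  "path_vertices n = {0..<n}"

definition path_adj :: "nat \<Rightarrow> nat \<Rightarrow> bool" where
  "path_adj i j \<longleftrightarrow> i = j + 1 \<or> j = i + 1"

definition cart_adj :: "('a \<Rightarrow> 'a \<Rightarrow> bool) \<Rightarrow> ('b \<Rightarrow> 'b \<Rightarrow> bool) \<Rightarrow> 'a \<times> 'b \<Rightarrow> 'a \<times> 'b \<Rightarrow> bool" where
  "cart_adj E1 E2 x y \<longleftrightarrow>
     (fst x = fst y \<and> E2 (snd x) (snd y)) \<or> (snd x = snd y \<and> E1 (fst x) (fst y))"

end

theory Submission
  imports Defs
begin

(* Let C be a minimum locating-dominating set of P_3 x P_n and let c_k be the number of codewords
   in column k, with empty virtual columns beyond both ends. Domination and separation of the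
   vertices in a window of three or four consecutive columns only involve codewords inside the
   window, and a finite check shows: an empty column has at least three codewords in its two
   neighbouring columns, a column with a single codeword has at least one, and two consecutive
   single-codeword columns followed by an empty column are preceded by a column with at least
   two codewords. Every word c_1 ... c_n over {0, ..., 3} obeying these rules has sum at least n,
   and at least n + 1 if n = 1 (mod 3): an amortised count along the word, with a potential
   depending on the next three letters and on the position modulo 3, makes this an induction. *)

lemma LD_attained:
  obtains C where "locating_dominating V E C" "card C = LD V E"
proof -
  have "\<exists>k C. locating_dominating V E C \<and> card C = k"
    by (intro exI[of _ "card V"] exI[of _ V]) (simp add: locating_dominating_def)
  from LeastI_ex[OF this] show ?thesis
    using that unfolding LD_def by blast
qed

lemma locating_dominating_dominates:
  assumes "locating_dominating V E C" "v \<in> V" "v \<notin> C"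
  shows "\<exists>w \<in> C. w \<in> closed_nbhd V E v"
  using assms unfolding locating_dominating_def by blast

lemma locating_dominating_separates:
  assumes "locating_dominating V E C" "u \<in> V" "u \<notin> C" "v \<in> V" "v \<notin> C" "u \<noteq> v"
  shows "\<exists>w \<in> C. (w \<in> closed_nbhd V E u) \<noteq> (w \<in> closed_nbhd V E v)"
  using assms unfolding locating_dominating_def by blast

fun grid_near :: "nat \<times> nat \<Rightarrow> nat \<times> nat \<Rightarrow> bool" where
  "grid_near (i, j) (a, b) \<longleftrightarrow>
     (i = a \<and> (j = b \<or> j = Suc b \<or> b = Suc j)) \<or> (j = b \<and> (i = Suc a \<or> a = Suc i))"

lemma closed_nbhd_grid:
  "closed_nbhd (path_vertices m \<times> path_vertices n) (cart_adj path_adj path_adj) v =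
     {q \<in> path_vertices m \<times> path_vertices n. grid_near v q}"
  by (cases v) (auto simp: closed_nbhd_def cart_adj_def path_adj_def)

definition locating_on :: "(nat \<times> nat) set \<Rightarrow> (nat \<times> nat) set \<Rightarrow> bool" where
  "locating_on D U \<longleftrightarrow>
     (\<forall>u \<in> U. u \<notin> D \<longrightarrow> (\<exists>q \<in> D. grid_near u q)) \<and>
     (\<forall>u \<in> U. \<forall>v \<in> U. u \<notin> D \<longrightarrow> v \<notin> D \<longrightarrow> u \<noteq> v \<longrightarrow>
        (\<exists>q \<in> D. grid_near u q \<noteq> grid_near v q))"

lemma locating_on_subset: "locating_on D U \<Longrightarrow> U' \<subseteq> U \<Longrightarrow> locating_on D U'"
  unfolding locating_on_def by blast

(* Moving every codeword one column to the right leaves column 0 empty: it stands for the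
   missing column left of the grid, so that the first column obeys the same local rules. *)
definition shift_right :: "(nat \<times> nat) set \<Rightarrow> (nat \<times> nat) set" where
  "shift_right C = (\<lambda>(r, k). (r, Suc k)) ` C"

lemma mem_shift_right_Suc [simp]: "(a, Suc b) \<in> shift_right C \<longleftrightarrow> (a, b) \<in> C"
  unfolding shift_right_def by force

lemma mem_shift_right_0 [simp]: "(a, 0) \<notin> shift_right C"
  unfolding shift_right_def by auto

lemma card_shift_right: "card (shift_right C) = card C"
  unfolding shift_right_def by (rule card_image) (auto intro: inj_onI)

lemma locating_on_shift_right:
  assumes C: "locating_dominating (path_vertices m \<times> path_vertices n) (cart_adj path_adj path_adj) C"
  shows "locating_on (shift_right C) ({0..<m} \<times> {1..n})"
proof -
  let ?V = "path_vertices m \<times> path_vertices n"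
  have near_iff: "w \<in> closed_nbhd ?V (cart_adj path_adj path_adj) v \<longleftrightarrow> grid_near v w"
    if "w \<in> C" for v w
    using that C unfolding closed_nbhd_grid locating_dominating_def by auto
  have inner: "\<exists>i k. u = (i, Suc k) \<and> (i, k) \<in> ?V \<and> (i, k) \<notin> C"
    if u: "u \<in> {0..<m} \<times> {1..n}" "u \<notin> shift_right C" for u
  proof -
    obtain i k where "u = (i, Suc k)" "i < m" "k < n"
      using u by (cases u) (auto dest!: Suc_le_D)
    then show ?thesis
      using u by (auto simp: path_vertices_def)
  qed
  show ?thesis
    unfolding locating_on_def
  proof (intro conjI ballI impI)
    fix u assume "u \<in> {0..<m} \<times> {1..n}" "u \<notin> shift_right C"
    then obtain i k where "u = (i, Suc k)" "(i, k) \<in> ?V" "(i, k) \<notin> C"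
      using inner by blast
    then obtain w where "w \<in> C" "w \<in> closed_nbhd ?V (cart_adj path_adj path_adj) (i, k)"
      using locating_dominating_dominates[OF C] by blast
    then obtain a b where "(a, b) \<in> C" "grid_near (i, k) (a, b)"
      using near_iff by (cases w) blast
    then show "\<exists>q \<in> shift_right C. grid_near u q"
      using \<open>u = (i, Suc k)\<close> by (intro bexI[of _ "(a, Suc b)"]) auto
  next
    fix u v assume "u \<in> {0..<m} \<times> {1..n}" "u \<notin> shift_right C"
      and "v \<in> {0..<m} \<times> {1..n}" "v \<notin> shift_right C" and "u \<noteq> v"
    then obtain i k i' k' where "u = (i, Suc k)" "(i, k) \<in> ?V" "(i, k) \<notin> C"
      and "v = (i', Suc k')" "(i', k') \<in> ?V" "(i', k') \<notin> C"
      using inner by blast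
    moreover have "(i, k) \<noteq> (i', k')"
      using \<open>u \<noteq> v\<close> \<open>u = (i, Suc k)\<close> \<open>v = (i', Suc k')\<close> by simp
    ultimately obtain w where "w \<in> C" and
      "(w \<in> closed_nbhd ?V (cart_adj path_adj path_adj) (i, k)) \<noteq>
        (w \<in> closed_nbhd ?V (cart_adj path_adj path_adj) (i', k'))"
      using locating_dominating_separates[OF C] by blast
    then obtain a b where "(a, b) \<in> C" "grid_near (i, k) (a, b) \<noteq> grid_near (i', k') (a, b)"
      using near_iff by (cases w) blast
    then show "\<exists>q \<in> shift_right C. grid_near u q \<noteq> grid_near v q"
      using \<open>u = (i, Suc k)\<close> \<open>v = (i', Suc k')\<close> by (intro bexI[of _ "(a, Suc b)"]) auto
  qed
qed

definition column_weight :: "(nat \<times> nat) set \<Rightarrow> nat \<Rightarrow> nat" where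
  "column_weight D k = card {r. (r, k) \<in> D}"

lemma card_eq_sum_column_weight:
  assumes "finite D" "finite K" "snd ` D \<subseteq> K"
  shows "card D = (\<Sum>k\<in>K. column_weight D k)"
proof -
  have "card {p \<in> D. snd p = k} = column_weight D k" for k
  proof -
    have "{p \<in> D. snd p = k} = (\<lambda>r. (r, k)) ` {r. (r, k) \<in> D}" by force
    then show ?thesis
      unfolding column_weight_def by (simp add: card_image inj_on_def)
  qed
  moreover have "(\<Sum>k\<in>K. card {p \<in> D. snd p = k}) = card D"
    using sum.group[OF assms, of "\<lambda>_. 1::nat"] by (simp only: card_eq_sum)
  ultimately show ?thesis by simp
qed

lemma column_weight_three_rows:
  assumes "D \<subseteq> {0..<3} \<times> UNIV"
  shows "column_weight D k = of_bool ((0, k) \<in> D) + of_bool ((1, k) \<in> D) + of_bool ((2, k) \<in> D)"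
proof -
  have "{r. (r, k) \<in> D} = {0, 1, 2} \<inter> {r. (r, k) \<in> D}" using assms by auto
  then have "column_weight D k = (\<Sum>r\<in>{0, 1, 2}. of_bool ((r, k) \<in> D))"
    unfolding column_weight_def by simp
  then show ?thesis by (simp del: sum_of_bool_eq)
qed

definition light_column_ok :: "nat \<Rightarrow> nat \<Rightarrow> nat \<Rightarrow> bool" where
  "light_column_ok a b c \<longleftrightarrow> (b = 0 \<longrightarrow> 3 \<le> a + c) \<and> (b = 1 \<longrightarrow> 1 \<le> a + c)"

definition light_pair_ok :: "nat \<Rightarrow> nat \<Rightarrow> nat \<Rightarrow> nat \<Rightarrow> bool" where
  "light_pair_ok a b c d \<longleftrightarrow> (b = 1 \<and> c = 1 \<and> d = 0 \<longrightarrow> 2 \<le> a)"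

lemma of_bool_sum3_iff:
  "of_bool a + of_bool b + of_bool c = (0::nat) \<longleftrightarrow> \<not> a \<and> \<not> b \<and> \<not> c"
  "of_bool a + of_bool b + of_bool c = (1::nat) \<longleftrightarrow>
     a \<and> \<not> b \<and> \<not> c \<or> \<not> a \<and> b \<and> \<not> c \<or> \<not> a \<and> \<not> b \<and> c"
  "(1::nat) \<le> of_bool a + of_bool b + of_bool c \<longleftrightarrow> a \<or> b \<or> c"
  "(2::nat) \<le> of_bool a + of_bool b + of_bool c \<longleftrightarrow> a \<and> b \<or> a \<and> c \<or> b \<and> c"
  "(3::nat) \<le> of_bool a + of_bool b + of_bool c \<longleftrightarrow> a \<and> b \<and> c"
  by (cases a; cases b; cases c; simp)+

lemma bex_neq_iff:
  "(\<exists>x\<in>A. P x \<noteq> Q x) \<longleftrightarrow> (\<exists>x\<in>A. P x \<and> \<not> Q x) \<or> (\<exists>x\<in>A. Q x \<and> \<not> P x)"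
  by blast

(* The inner cells of the window only see codewords inside the window, so after unfolding
   the claim is a propositional tautology in the membership of the window cells. *)
lemma light_column_ok_if_locating_on:
  assumes D: "D \<subseteq> {0..<3} \<times> UNIV" and loc: "locating_on D ({0, 1, 2} \<times> {Suc j})"
  shows "light_column_ok (column_weight D j) (column_weight D (Suc j)) (column_weight D (Suc (Suc j)))"
proof -
  have no_row3: "(3, k) \<notin> D" for k using D by auto
  show ?thesis
    using loc
    unfolding light_column_ok_def column_weight_three_rows[OF D] locating_on_def bex_neq_iff
    by (simp add: no_row3 of_bool_sum3_iff Bex_def
        conj_disj_distribL conj_disj_distribR ex_disj_distrib)
      (simp only: numeral_2_eq_2 numeral_3_eq_3, satx)
qed

lemma light_pair_ok_if_locating_on:
  assumes D: "D \<subseteq> {0..<3} \<times> UNIV" and loc: "locating_on D ({0, 1, 2} \<times> {Suc j, Suc (Suc j)})"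
  shows "light_pair_ok (column_weight D j) (column_weight D (Suc j))
           (column_weight D (Suc (Suc j))) (column_weight D (Suc (Suc (Suc j))))"
proof -
  have no_row3: "(3, k) \<notin> D" for k using D by auto
  show ?thesis
    using loc
    unfolding light_pair_ok_def column_weight_three_rows[OF D] locating_on_def bex_neq_iff
    by (simp add: no_row3 of_bool_sum3_iff Bex_def
        conj_disj_distribL conj_disj_distribR ex_disj_distrib)
      (simp only: numeral_2_eq_2 numeral_3_eq_3, satx)
qed

(* Certificate for the amortised count: after m columns, the number of codewords exceeds m by at
   least the potential of the next three column weights at phase m mod 3. The three inequalities
   this needs are checked by exhaustive case distinction. *)
definition potential :: "nat \<Rightarrow> nat \<Rightarrow> nat \<Rightarrow> nat \<Rightarrow> int" where
  "potential a b c r =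
     (if a = 0 \<and> b = 0 \<and> c = 3 then (if r = 2 then 1 else 2)
      else if a = 0 \<and> b = 1 \<and> 1 \<le> c then 1
      else if a = 0 \<and> b = 2 then 1
      else if a = 1 \<and> b = 0 \<and> 2 \<le> c then 1
      else if a = 1 \<and> b = 1 \<and> c = 0 then 1
      else if a = 0 \<and> b = 3 \<and> r \<noteq> 0 then 1
      else if a = 3 \<and> r = 1 then -1
      else 0)"

lemma le_3_cases: "(a::nat) \<le> 3 \<Longrightarrow> a = 0 \<or> a = 1 \<or> a = 2 \<or> a = 3"
  by auto

lemma less_3_cases: "(r::nat) < 3 \<Longrightarrow> r = 0 \<or> r = 1 \<or> r = 2"
  by auto

lemma potential_initial:
  assumes "a \<le> 3" "b \<le> 3" "c \<le> 3"
    and "light_column_ok 0 a b" "light_column_ok a b c" "light_pair_ok 0 a b c"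
  shows "potential a b c 0 \<le> 0"
  using le_3_cases[OF assms(1)] le_3_cases[OF assms(2)] le_3_cases[OF assms(3)] assms(4-6)
  by (elim disjE) (simp_all add: light_column_ok_def light_pair_ok_def potential_def)

lemma potential_step:
  assumes "a \<le> 3" "b \<le> 3" "c \<le> 3" "d \<le> 3" "r < 3"
    and "light_column_ok a b c" "light_column_ok b c d" "light_pair_ok a b c d"
  shows "1 + potential b c d ((r + 1) mod 3) \<le> int a + potential a b c r"
  using le_3_cases[OF assms(1)] le_3_cases[OF assms(2)] le_3_cases[OF assms(3)]
    le_3_cases[OF assms(4)] less_3_cases[OF assms(5)] assms(6-8)
  by (elim disjE) (simp_all add: light_column_ok_def light_pair_ok_def potential_def)

lemma potential_final:
  assumes "a \<le> 3" "b \<le> 3" "c \<le> 3" "r < 3"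
    and "light_column_ok a b c" "light_column_ok b c 0" "light_pair_ok a b c 0"
  shows "3 + of_bool (r = 1) \<le> int a + int b + int c + potential a b c r"
  using le_3_cases[OF assms(1)] le_3_cases[OF assms(2)] le_3_cases[OF assms(3)]
    less_3_cases[OF assms(4)] assms(5-7)
  by (elim disjE) (simp_all add: light_column_ok_def light_pair_ok_def potential_def)

locale admissible_word =
  fixes n :: nat and c :: "nat \<Rightarrow> nat"
  assumes c_0: "c 0 = 0"
    and c_le_3: "c k \<le> 3"
    and c_beyond: "n < k \<Longrightarrow> c k = 0"
    and light_column: "k < n \<Longrightarrow> light_column_ok (c k) (c (k + 1)) (c (k + 2))"
    and light_pair: "k + 1 < n \<Longrightarrow> light_pair_ok (c k) (c (k + 1)) (c (k + 2)) (c (k + 3))"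
begin

lemma partial_sum_ge_potential:
  "m + 3 \<le> n \<Longrightarrow>
    int m + potential (c (m + 1)) (c (m + 2)) (c (m + 3)) (m mod 3) \<le> int (\<Sum>k = 1..m. c k)"
proof (induction m)
  case 0
  have shift: "(1::nat) + 1 = 2" "(1::nat) + 2 = 3"
    by simp_all
  have "light_column_ok 0 (c 1) (c 2)" "light_column_ok (c 1) (c 2) (c 3)"
    "light_pair_ok 0 (c 1) (c 2) (c 3)"
    using light_column[of 0] light_column[of 1] light_pair[of 0] 0 c_0
    unfolding add_0 shift by simp_all
  then have "potential (c 1) (c 2) (c 3) 0 \<le> 0"
    by (rule potential_initial[OF c_le_3 c_le_3 c_le_3])
  then show ?case
    unfolding add_0 by simp
next
  case (Suc m)
  have shift: "m + 1 + 1 = m + 2" "m + 1 + 2 = m + 3" "m + 2 + 1 = m + 3" "m + 2 + 2 = m + 4"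
    "m + 1 + 3 = m + 4" "Suc m + 1 = m + 2" "Suc m + 2 = m + 3" "Suc m + 3 = m + 4"
    by simp_all
  have "light_column_ok (c (m + 1)) (c (m + 2)) (c (m + 3))"
    "light_column_ok (c (m + 2)) (c (m + 3)) (c (m + 4))"
    "light_pair_ok (c (m + 1)) (c (m + 2)) (c (m + 3)) (c (m + 4))"
    using light_column[of "m + 1"] light_column[of "m + 2"] light_pair[of "m + 1"] Suc.prems
    unfolding shift by simp_all
  then have "1 + potential (c (m + 2)) (c (m + 3)) (c (m + 4)) ((m mod 3 + 1) mod 3)
      \<le> int (c (m + 1)) + potential (c (m + 1)) (c (m + 2)) (c (m + 3)) (m mod 3)"
    using potential_step c_le_3 by simp
  moreover have "int m + potential (c (m + 1)) (c (m + 2)) (c (m + 3)) (m mod 3) \<le> int (\<Sum>k = 1..m. c k)"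
    using Suc by simp
  moreover have "Suc m mod 3 = (m mod 3 + 1) mod 3"
    by (simp add: mod_Suc_eq)
  ultimately show ?case
    unfolding shift by simp
qed

lemma sum_lower_bound:
  assumes "1 \<le> n"
  shows "n + of_bool (n mod 3 = 1) \<le> (\<Sum>k = 1..n. c k)"
proof (cases "3 \<le> n")
  case True
  then obtain m where n: "n = m + 3"
    by (metis add.commute le_Suc_ex)
  have shift: "m + 1 + 1 = m + 2" "m + 1 + 2 = m + 3" "m + 2 + 1 = m + 3" "m + 2 + 2 = m + 4"
    "m + 1 + 3 = m + 4"
    by simp_all
  have "light_column_ok (c (m + 1)) (c (m + 2)) (c (m + 3))"
    "light_column_ok (c (m + 2)) (c (m + 3)) 0"
    "light_pair_ok (c (m + 1)) (c (m + 2)) (c (m + 3)) 0"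
    using light_column[of "m + 1"] light_column[of "m + 2"] light_pair[of "m + 1"]
      c_beyond[of "m + 4"] n
    unfolding shift by simp_all
  then have "3 + of_bool (m mod 3 = 1) \<le> int (c (m + 1)) + int (c (m + 2)) + int (c (m + 3))
      + potential (c (m + 1)) (c (m + 2)) (c (m + 3)) (m mod 3)"
    using potential_final c_le_3 by simp
  moreover have "int m + potential (c (m + 1)) (c (m + 2)) (c (m + 3)) (m mod 3) \<le> int (\<Sum>k = 1..m. c k)"
    using partial_sum_ge_potential n by simp
  moreover have "(\<Sum>k = 1..n. c k) = (\<Sum>k = 1..m. c k) + c (m + 1) + c (m + 2) + c (m + 3)"
    using n by (simp add: numeral_3_eq_3)
  ultimately have "int (n + of_bool (n mod 3 = 1)) \<le> int (\<Sum>k = 1..n. c k)"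
    using n by simp
  then show ?thesis
    by (simp only: of_nat_le_iff)
next
  case False
  with assms consider "n = 1" | "n = 2"
    by linarith
  then show ?thesis
  proof cases
    case 1
    then show ?thesis
      using light_column[of 0, unfolded add_0] c_0 c_beyond[of 2] by (simp add: light_column_ok_def)
  next
    case 2
    have "light_column_ok 0 (c 1) (c 2)" "light_column_ok (c 1) (c 2) 0"
      using light_column[of 0] light_column[of 1] c_0 c_beyond[of 3] 2
      by (simp_all add: eval_nat_numeral)
    moreover have "(\<Sum>k = 1..n. c k) = c 1 + c 2"
      using 2 by (simp add: numeral_2_eq_2)
    ultimately show ?thesis
      using 2 by (auto simp: light_column_ok_def)
  qed
qed

end

lemma admissible_word_shift_right:
  assumes C: "locating_dominating (path_vertices 3 \<times> path_vertices n) (cart_adj path_adj path_adj) C"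
  shows "admissible_word n (column_weight (shift_right C))"
proof -
  have C_sub: "C \<subseteq> {0..<3} \<times> {0..<n}"
    using C by (auto simp: locating_dominating_def path_vertices_def)
  then have rows: "shift_right C \<subseteq> {0..<3} \<times> UNIV"
    by (auto simp: shift_right_def)
  have loc: "locating_on (shift_right C) ({0..<3} \<times> {1..n})"
    by (rule locating_on_shift_right[OF C])
  have Suc_eqs: "k + 1 = Suc k" "k + 2 = Suc (Suc k)" "k + 3 = Suc (Suc (Suc k))" for k :: nat
    by simp_all
  show ?thesis
  proof
    show "column_weight (shift_right C) 0 = 0"
      by (simp add: column_weight_def)
    show "column_weight (shift_right C) k \<le> 3" for k
      by (simp add: column_weight_three_rows[OF rows])
    show "column_weight (shift_right C) k = 0" if "n < k" for k
    proof -
      have "{r. (r, k) \<in> shift_right C} = {}"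
        using that C_sub by (cases k) auto
      then show ?thesis
        by (simp add: column_weight_def)
    qed
    show "light_column_ok (column_weight (shift_right C) k) (column_weight (shift_right C) (k + 1))
        (column_weight (shift_right C) (k + 2))" if "k < n" for k
      unfolding Suc_eqs using that
      by (intro light_column_ok_if_locating_on rows locating_on_subset[OF loc]) auto
    show "light_pair_ok (column_weight (shift_right C) k) (column_weight (shift_right C) (k + 1))
        (column_weight (shift_right C) (k + 2)) (column_weight (shift_right C) (k + 3))" if "k + 1 < n" for k
      unfolding Suc_eqs using that
      by (intro light_pair_ok_if_locating_on rows locating_on_subset[OF loc]) auto
  qed
qed

lemma card_eq_sum_column_weight_shift_right:
  assumes "C \<subseteq> path_vertices m \<times> path_vertices n"
  shows "card C = (\<Sum>k = 1..n. column_weight (shift_right C) k)"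
proof -
  have "finite (shift_right C)" "snd ` shift_right C \<subseteq> {1..n}"
    using assms finite_subset[OF assms] by (auto simp: shift_right_def path_vertices_def)
  then show ?thesis
    using card_eq_sum_column_weight[of "shift_right C" "{1..n}"] card_shift_right[of C] by simp
qed

theorem lemma4p13:
  fixes n :: nat
  assumes "n \<ge> 1"
  shows "LD (path_vertices 3 \<times> path_vertices n) (cart_adj path_adj path_adj)
           \<ge> (if n mod 3 = 1 then n + 1 else n)"
proof -
  obtain C where C: "locating_dominating (path_vertices 3 \<times> path_vertices n) (cart_adj path_adj path_adj) C"
    and card_C: "card C = LD (path_vertices 3 \<times> path_vertices n) (cart_adj path_adj path_adj)"
    by (rule LD_attained)
  have "card C = (\<Sum>k = 1..n. column_weight (shift_right C) k)"
    using C by (intro card_eq_sum_column_weight_shift_right[where m = 3]) (simp add: locating_dominating_def)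
  moreover have "n + of_bool (n mod 3 = 1) \<le> (\<Sum>k = 1..n. column_weight (shift_right C) k)"
    using admissible_word.sum_lower_bound[OF admissible_word_shift_right[OF C] assms] .
  ultimately show ?thesis
    using card_C by (cases "n mod 3 = 1") simp_all
qed

end
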